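(* Let $k,r\ge 0$ and let $T$ be a tree with $n\le 2^r+2$ vertices and $l<k$ leaves, precolored so that its colored vertices are exactly its leaves, where this coloring of the leaves does not extend to a proper 3-coloring of $T$. Then Spoiler has a winning strategy in $\mathcal{G}^k_r(T)$.
   Context: Colors are red, blue, green; a coloring is proper if adjacent vertices get different colors. A $k$-precolored graph is a finite graph together with an assignment of colors to at most $k$ of its vertices. The game $\mathcal{G}^k_r(H)$ on a $k$-precolored graph $H$ starts from the given precoloring and lasts $r$ rounds; in each round Spoiler may erase the colors of some currently colored vertices and then selects a vertex, which Duplicator colors with one of the three colors; after each round at most $k$ vertices may be colored. Duplicator wins if the initial partial coloring and the partial coloring after each round are proper; otherwise Spoiler wins. *)

theory Defs
  imports Main
begin

datatype color = Red | Blue | Green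

definition simple_graph :: "'a set \<Rightarrow> ('a \<Rightarrow> 'a \<Rightarrow> bool) \<Rightarrow> bool" where
  "simple_graph V E \<longleftrightarrow> finite V \<and> (\<forall>u v. E u v \<longrightarrow> E v u) \<and> (\<forall>v. \<not> E v v)
     \<and> (\<forall>u v. E u v \<longrightarrow> u \<in> V \<and> v \<in> V)"

definition connected_graph :: "'a set \<Rightarrow> ('a \<Rightarrow> 'a \<Rightarrow> bool) \<Rightarrow> bool" where
  "connected_graph V E \<longleftrightarrow> V \<noteq> {} \<and> (\<forall>u\<in>V. \<forall>v\<in>V. E\<^sup>*\<^sup>* u v)"

definition is_cycle :: "('a \<Rightarrow> 'a \<Rightarrow> bool) \<Rightarrow> 'a list \<Rightarrow> bool" where
  "is_cycle E cs \<longleftrightarrow> length cs \<ge> 3 \<and> distinct cs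
     \<and> (\<forall>i. Suc i < length cs \<longrightarrow> E (cs ! i) (cs ! Suc i))
     \<and> E (last cs) (hd cs)"

definition is_tree :: "'a set \<Rightarrow> ('a \<Rightarrow> 'a \<Rightarrow> bool) \<Rightarrow> bool" where
  "is_tree V E \<longleftrightarrow> simple_graph V E \<and> connected_graph V E \<and> (\<nexists>cs. is_cycle E cs)"

definition leaves :: "'a set \<Rightarrow> ('a \<Rightarrow> 'a \<Rightarrow> bool) \<Rightarrow> 'a set" where
  "leaves V E = {v \<in> V. card {u \<in> V. E v u} = 1}"

definition proper_partial :: "('a \<Rightarrow> 'a \<Rightarrow> bool) \<Rightarrow> ('a \<Rightarrow> color option) \<Rightarrow> bool" where
  "proper_partial E p \<longleftrightarrow> (\<forall>u v. E u v \<longrightarrow> p u \<noteq> None \<longrightarrow> p v \<noteq> None \<longrightarrow> p u \<noteq> p v)"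

definition extends_to_proper :: "'a set \<Rightarrow> ('a \<Rightarrow> 'a \<Rightarrow> bool) \<Rightarrow> ('a \<Rightarrow> color option) \<Rightarrow> bool" where
  "extends_to_proper V E p \<longleftrightarrow> (\<exists>g :: 'a \<Rightarrow> color.
      (\<forall>u\<in>V. \<forall>v\<in>V. E u v \<longrightarrow> g u \<noteq> g v) \<and> (\<forall>v \<in> dom p. p v = Some (g v)))"

text \<open>spoiler_wins V E k r p: Spoiler has a winning strategy in the r-round game
starting from the current partial coloring p.  In a round Spoiler erases some colors
(passing to a restriction q of p), selects an uncolored vertex v such that after the
round at most k vertices are colored, and Duplicator colors v with some color.\<close>
fun spoiler_wins :: "'a set \<Rightarrow> ('a \<Rightarrow> 'a \<Rightarrow> bool) \<Rightarrow> nat \<Rightarrow> nat \<Rightarrow> ('a \<Rightarrow> color option) \<Rightarrow> bool" where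
  "spoiler_wins V E k 0 p \<longleftrightarrow> \<not> proper_partial E p"
| "spoiler_wins V E k (Suc r) p \<longleftrightarrow> \<not> proper_partial E p \<or>
     (\<exists>q v. q \<subseteq>\<^sub>m p \<and> v \<in> V \<and> v \<notin> dom q \<and> card (dom q) + 1 \<le> k \<and>
        (\<forall>c. spoiler_wins V E k r (q(v \<mapsto> c))))"

end

theory Submission
  imports Defs
begin

text \<open>
  Spoiler maintains a subtree \<open>S\<close> whose colored vertices are exactly its leaves, with at most
  \<open>2^r + 2\<close> vertices, on which the current coloring does not extend.  With \<open>r\<close> rounds left he
  colors a centroid \<open>v\<close> of \<open>S\<close>; when \<open>|S| \<ge> 4\<close> it is not a leaf, so it is still uncolored.
  Whatever Duplicator answers, the coloring either becomes improper or fails to extend to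
  \<open>{v} \<union> C\<close> for some branch \<open>C\<close> at \<open>v\<close>: colorings of all branches would agree at \<open>v\<close> and glue.
  Spoiler then erases every color outside \<open>{v} \<union> C\<close>.  This subtree has at most
  \<open>|S|/2 + 1 \<le> 2^(r-1) + 2\<close> vertices and its leaves are \<open>v\<close> and the old leaves in \<open>C\<close>; since every
  other branch at \<open>v\<close> contains an old leaf, fewer than \<open>k\<close> vertices stay colored.  When no round is
  left the subtree has at most 3 vertices, and there every proper partial coloring extends
  greedily, so the coloring is already improper.
\<close>

lemma rtranclp_step_into:
  assumes "r\<^sup>*\<^sup>* a b" "\<not> P a" "P b"
  shows "\<exists>y z. r\<^sup>*\<^sup>* a y \<and> r y z \<and> \<not> P y \<and> P z"
  using assms by (induction rule: rtranclp_induct) blast+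

lemma is_cycle_iff:
  "is_cycle E cs \<longleftrightarrow> 3 \<le> length cs \<and> distinct cs \<and> successively E cs \<and> E (last cs) (hd cs)"
  by (simp add: is_cycle_def successively_conv_nth)

lemma is_cycle_drop:
  assumes "distinct xs" "successively E xs" "i + 3 \<le> length xs" "E (last xs) (xs ! i)"
  shows "is_cycle E (drop i xs)"
  unfolding is_cycle_iff
proof (intro conjI)
  show "successively E (drop i xs)"
    using assms(2) by (simp add: successively_conv_nth)
  show "E (last (drop i xs)) (hd (drop i xs))"
    using assms(3,4) by (simp add: last_drop hd_drop_conv_nth)
qed (use assms(1,3) in simp_all)

lemma exists_color_not_in:
  fixes p :: "'a \<Rightarrow> color option"
  assumes "finite N" "card N \<le> 2"
  shows "\<exists>c. Some c \<notin> p ` N"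
proof (rule ccontr)
  assume "\<nexists>c. Some c \<notin> p ` N"
  then have "{Some Red, Some Blue, Some Green} \<subseteq> p ` N" by auto
  then have "card {Some Red, Some Blue, Some Green} \<le> card N"
    by (meson assms(1) card_image_le card_mono finite_imageI le_trans)
  with assms(2) show False by simp
qed

lemma spoiler_wins_if_improper: "\<not> proper_partial E p \<Longrightarrow> spoiler_wins V E k r p"
  by (cases r) auto

lemma proper_partial_map_le: "p \<subseteq>\<^sub>m p' \<Longrightarrow> proper_partial E p' \<Longrightarrow> proper_partial E p"
  unfolding proper_partial_def map_le_def by (metis domIff)

lemma spoiler_wins_map_le:
  assumes "p \<subseteq>\<^sub>m p'" "spoiler_wins V E k r p"
  shows "spoiler_wins V E k r p'"
proof (cases "proper_partial E p")
  case False
  then have "\<not> proper_partial E p'" using assms(1) proper_partial_map_le by blast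
  then show ?thesis by (rule spoiler_wins_if_improper)
next
  case True
  then obtain r' where r: "r = Suc r'" using assms(2) by (cases r) auto
  with True assms(2) obtain q v where "q \<subseteq>\<^sub>m p" "v \<in> V" "v \<notin> dom q" "card (dom q) + 1 \<le> k"
    "\<forall>c. spoiler_wins V E k r' (q(v \<mapsto> c))" by auto
  moreover have "q \<subseteq>\<^sub>m p'" using \<open>q \<subseteq>\<^sub>m p\<close> assms(1) by (rule map_le_trans)
  ultimately show ?thesis unfolding r spoiler_wins.simps by blast
qed

lemma extends_to_proper_map_le:
  "p \<subseteq>\<^sub>m p' \<Longrightarrow> extends_to_proper S E p' \<Longrightarrow> extends_to_proper S E p"
  unfolding extends_to_proper_def map_le_def by (metis domIff)

lemma extends_to_proper_restrict:
  assumes "extends_to_proper S E (p |` S)"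
  shows "extends_to_proper S E p"
proof -
  obtain g where g: "\<forall>u\<in>S. \<forall>w\<in>S. E u w \<longrightarrow> g u \<noteq> g w" "\<forall>x\<in>dom (p |` S). (p |` S) x = Some (g x)"
    using assms unfolding extends_to_proper_def by blast
  define g' where "g' y = (if y \<in> S then g y else the (p y))" for y
  have "\<forall>u\<in>S. \<forall>w\<in>S. E u w \<longrightarrow> g' u \<noteq> g' w" "\<forall>x\<in>dom p. p x = Some (g' x)"
    using g by (auto simp: g'_def)
  then show ?thesis unfolding extends_to_proper_def by blast
qed

locale forest =
  fixes E :: "'a \<Rightarrow> 'a \<Rightarrow> bool"
  assumes edge_sym: "E u w \<Longrightarrow> E w u" and edge_irrefl: "\<not> E u u"
    and acyclic: "\<And>cs. \<not> is_cycle E cs"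
begin

definition induced :: "'a set \<Rightarrow> 'a \<Rightarrow> 'a \<Rightarrow> bool" where
  "induced A a b \<longleftrightarrow> E a b \<and> a \<in> A \<and> b \<in> A"

definition component :: "'a set \<Rightarrow> 'a \<Rightarrow> 'a set" where
  "component A x = {y. (induced A)\<^sup>*\<^sup>* x y}"

definition connected_on :: "'a set \<Rightarrow> bool" where
  "connected_on S \<longleftrightarrow> (\<forall>a\<in>S. \<forall>b\<in>S. (induced S)\<^sup>*\<^sup>* a b)"

lemma symp_induced: "symp (induced A)"
  unfolding symp_def induced_def using edge_sym by blast

lemma induced_rtranclp_sym: "(induced A)\<^sup>*\<^sup>* a b \<Longrightarrow> (induced A)\<^sup>*\<^sup>* b a"
  using symp_rtranclp[OF symp_induced] by (blast dest: sympD)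

lemma induced_rtranclp_mem: "(induced A)\<^sup>*\<^sup>* a b \<Longrightarrow> a \<in> A \<Longrightarrow> b \<in> A"
  by (induction rule: rtranclp_induct) (auto simp: induced_def)

lemma induced_rtranclp_mono: "A \<subseteq> B \<Longrightarrow> (induced A)\<^sup>*\<^sup>* a b \<Longrightarrow> (induced B)\<^sup>*\<^sup>* a b"
  by (erule rtranclp_mono[THEN predicate2D, rotated]) (auto simp: induced_def)

lemma self_in_component: "x \<in> component A x"
  by (simp add: component_def)

lemma component_subset: "x \<in> A \<Longrightarrow> component A x \<subseteq> A"
  unfolding component_def using induced_rtranclp_mem by blast

lemma component_eq: "y \<in> component A x \<Longrightarrow> component A y = component A x"
  unfolding component_def using induced_rtranclp_sym by (auto intro: rtranclp_trans)

lemma component_closed: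
  assumes "x \<in> A" "y \<in> component A x" "z \<in> A" "E y z"
  shows "z \<in> component A x"
proof -
  have "induced A y z" using assms component_subset[of x A] by (auto simp: induced_def)
  with assms(2) show ?thesis by (auto simp: component_def intro: rtranclp.rtrancl_into_rtrancl)
qed

lemma induced_rtranclp_within_component:
  "(induced A)\<^sup>*\<^sup>* a b \<Longrightarrow> (induced (component A a))\<^sup>*\<^sup>* a b"
proof (induction rule: rtranclp_induct)
  case (step b c)
  have "b \<in> component A a" "c \<in> component A a"
    using step.hyps by (auto simp: component_def intro: rtranclp.rtrancl_into_rtrancl)
  with step.hyps(2) have "induced (component A a) b c" by (simp add: induced_def)
  with step.IH show ?case by (rule rtranclp.rtrancl_into_rtrancl)
qed simp

lemma induced_rtranclp_simple_path:
  assumes "(induced A)\<^sup>*\<^sup>* a b" "a \<in> A"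
  shows "\<exists>xs. xs \<noteq> [] \<and> hd xs = a \<and> last xs = b \<and> distinct xs \<and> set xs \<subseteq> A \<and> successively E xs"
  using assms
proof (induction rule: rtranclp_induct)
  case base
  then show ?case by (intro exI[of _ "[a]"]) auto
next
  case (step b c)
  then obtain xs where xs: "xs \<noteq> []" "hd xs = a" "last xs = b" "distinct xs" "set xs \<subseteq> A"
    "successively E xs" by blast
  have c: "c \<in> A" "E b c" using step.hyps(2) unfolding induced_def by auto
  show ?case
  proof (cases "c \<in> set xs")
    case True
    then obtain i where i: "i < length xs" "xs ! i = c" by (metis in_set_conv_nth)
    define ys where "ys = take (Suc i) xs"
    have "successively E ys"
      using xs(6) by (auto simp: ys_def successively_conv_nth)
    moreover have "last ys = c"
      using i unfolding ys_def by (metis last_snoc take_Suc_conv_app_nth)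
    moreover have "ys \<noteq> []" "hd ys = a" "distinct ys" "set ys \<subseteq> A"
      using xs(1,2,4,5) by (auto simp: ys_def hd_take dest: in_set_takeD)
    ultimately show ?thesis by blast
  next
    case False
    have "successively E (xs @ [c])"
      using xs(1,3,6) c(2) by (simp add: successively_append_iff)
    moreover have "hd (xs @ [c]) = a" "distinct (xs @ [c])" "set (xs @ [c]) \<subseteq> A"
      using xs(1,2,4,5) c(1) False by auto
    ultimately show ?thesis by (intro exI[of _ "xs @ [c]"]) simp
  qed
qed

lemma unique_neighbor_in_component:
  assumes "v \<notin> A" "a \<in> A" "b \<in> component A a" "E v a" "E v b"
  shows "a = b"
proof (rule ccontr)
  assume "a \<noteq> b"
  obtain xs where xs: "xs \<noteq> []" "hd xs = a" "last xs = b" "distinct xs" "set xs \<subseteq> A"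
    "successively E xs"
    using induced_rtranclp_simple_path assms(2,3) unfolding component_def by blast
  obtain ys where ys: "xs = a # ys" using xs(1,2) by (cases xs) auto
  with xs(3) \<open>a \<noteq> b\<close> have "ys \<noteq> []" by (cases ys) simp_all
  have "is_cycle E (v # a # ys)" unfolding is_cycle_iff
  proof (intro conjI)
    show "3 \<le> length (v # a # ys)" using \<open>ys \<noteq> []\<close> by (cases ys) auto
    show "distinct (v # a # ys)" using xs(4,5) ys assms(1) by auto
    show "successively E (v # a # ys)" using xs(6) ys assms(4) by simp
    show "E (last (v # a # ys)) (hd (v # a # ys))"
      using xs(3) ys \<open>ys \<noteq> []\<close> edge_sym[OF assms(5)] by simp
  qed
  then show False using acyclic by simp
qed

lemma component_has_neighbor:
  assumes "connected_on S" "v \<in> S" "x \<in> S - {v}"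
  obtains z where "z \<in> component (S - {v}) x" "E v z"
proof -
  let ?C = "component (S - {v}) x"
  have "(induced S)\<^sup>*\<^sup>* v x" using assms unfolding connected_on_def by blast
  moreover have "v \<notin> ?C" using component_subset[of x "S - {v}"] assms(3) by blast
  ultimately obtain y z where yz: "induced S y z" "y \<notin> ?C" "z \<in> ?C"
    using rtranclp_step_into[of "induced S" v x "\<lambda>t. t \<in> ?C"] self_in_component by blast
  have "y = v"
  proof (rule ccontr)
    assume "y \<noteq> v"
    have "E z y" using yz(1) unfolding induced_def by (blast intro: edge_sym)
    with \<open>y \<noteq> v\<close> yz(1) have "y \<in> ?C"
      using component_closed[OF assms(3) yz(3)] unfolding induced_def by blast
    with yz(2) show False ..
  qed
  with yz(1,3) show thesis using that unfolding induced_def by blast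
qed

lemma path_end_neighbor_off_path:
  assumes "distinct xs" "successively E xs" "2 \<le> length xs"
    and "E (last xs) u" "u \<noteq> xs ! (length xs - 2)"
  shows "u \<notin> set xs"
proof
  assume "u \<in> set xs"
  then obtain i where i: "i < length xs" "xs ! i = u" by (metis in_set_conv_nth)
  have "u \<noteq> last xs" using assms(4) edge_irrefl by blast
  moreover have "xs \<noteq> []" using assms(3) by auto
  ultimately have "i \<noteq> length xs - 1" using i by (auto simp: last_conv_nth)
  moreover have "i \<noteq> length xs - 2" using i assms(5) by auto
  ultimately have "i + 3 \<le> length xs" using i by linarith
  then have "is_cycle E (drop i xs)" using is_cycle_drop[OF assms(1,2)] assms(4) i(2) by simp
  then show False using acyclic by simp
qed

lemma finite_forest_has_leaf:
  assumes "finite A" "a \<in> A" "b \<in> A" "E a b"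
  obtains x where "x \<in> A" "x \<noteq> a" "\<And>y z. y \<in> A \<Longrightarrow> z \<in> A \<Longrightarrow> E x y \<Longrightarrow> E x z \<Longrightarrow> y = z"
proof -
  define P where
    "P xs \<longleftrightarrow> 2 \<le> length xs \<and> hd xs = a \<and> distinct xs \<and> set xs \<subseteq> A \<and> successively E xs" for xs
  have "a \<noteq> b" using assms(4) edge_irrefl by blast
  then have "P [a, b]" using assms(2-4) by (simp add: P_def)
  moreover have "length xs < Suc (card A)" if "P xs" for xs
  proof -
    have "length xs = card (set xs)" using that by (simp add: P_def distinct_card)
    also have "\<dots> \<le> card A" using that assms(1) by (simp add: P_def card_mono)
    finally show ?thesis by simp
  qed
  ultimately obtain xs where xs: "P xs" and longest: "\<And>ys. P ys \<Longrightarrow> length ys \<le> length xs"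
    using ex_has_greatest_nat[of P "[a, b]" length] by blast
  have xs_ne: "xs \<noteq> []" and len: "2 \<le> length xs" and "hd xs = a" "distinct xs" "set xs \<subseteq> A"
    and path: "successively E xs"
    using xs unfolding P_def by auto
  define x where "x = last xs"
  show thesis
  proof (rule that)
    show "x \<in> A" using xs_ne \<open>set xs \<subseteq> A\<close> unfolding x_def by auto
    obtain ys where ys: "xs = a # ys" using xs_ne \<open>hd xs = a\<close> by (cases xs) auto
    with len have "ys \<noteq> []" by auto
    then have "x \<in> set ys" unfolding x_def ys by simp
    with ys \<open>distinct xs\<close> show "x \<noteq> a" by auto
  next
    fix y z assume yz: "y \<in> A" "z \<in> A" "E x y" "E x z"
    show "y = z"
    proof (rule ccontr)
      assume "y \<noteq> z"
      define pred where "pred = xs ! (length xs - 2)"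
      obtain u where u: "u \<in> A" "E x u" "u \<noteq> pred"
      proof (cases "y = pred")
        case True
        with yz \<open>y \<noteq> z\<close> show thesis using that[of z] by blast
      next
        case False
        with yz show thesis using that[of y] by blast
      qed
      have "u \<notin> set xs"
        using path_end_neighbor_off_path[OF \<open>distinct xs\<close> path len] u unfolding x_def pred_def by blast
      then have "successively E (xs @ [u])"
        using path xs_ne u(2) unfolding x_def by (simp add: successively_append_iff)
      with xs xs_ne u(1) \<open>u \<notin> set xs\<close> have "P (xs @ [u])" unfolding P_def by simp
      from longest[OF this] show False by simp
    qed
  qed
qed

lemma component_meets_leaves:
  assumes "finite S" "v \<in> S" "w \<in> S - {v}" "E v w"
  shows "component (S - {v}) w \<inter> leaves S E \<noteq> {}"
proof
  let ?C = "component (S - {v}) w"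
  assume no_leaf: "?C \<inter> leaves S E = {}"
  have C: "?C \<subseteq> S - {v}" using component_subset[OF assms(3)] .
  then have "finite (insert v ?C)" using assms(1) finite_subset by blast
  then obtain x where x: "x \<in> insert v ?C" "x \<noteq> v"
    and deg: "\<And>y z. y \<in> insert v ?C \<Longrightarrow> z \<in> insert v ?C \<Longrightarrow> E x y \<Longrightarrow> E x z \<Longrightarrow> y = z"
    using finite_forest_has_leaf[of "insert v ?C" v w] assms(4) self_in_component by blast
  have xC: "x \<in> ?C" using x by simp
  have nbrs: "{y \<in> S. E x y} \<subseteq> insert v ?C"
    using component_closed[OF assms(3) xC] by blast
  obtain y where y: "y \<in> S" "E x y"
  proof (cases "x = w")
    case True
    then show thesis using that[of v] assms(2) edge_sym[OF assms(4)] by blast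
  next
    case False
    from xC have "(induced (S - {v}))\<^sup>*\<^sup>* w x" by (simp add: component_def)
    with False obtain y where "induced (S - {v}) y x" by (metis rtranclp.cases)
    then show thesis using that[of y] edge_sym unfolding induced_def by blast
  qed
  have "u = y" if "u \<in> S" "E x u" for u
    using deg[of u y] nbrs that y by blast
  then have "{y \<in> S. E x y} = {y}" using y by blast
  moreover have "x \<in> S" using xC C by blast
  ultimately have "x \<in> leaves S E" by (simp add: leaves_def)
  with no_leaf xC show False by blast
qed

lemma leaves_branch:
  assumes "connected_on S" "v \<in> S" "x \<in> S - {v}"
  shows "leaves (insert v (component (S - {v}) x)) E = insert v (leaves S E \<inter> component (S - {v}) x)"
proof -
  let ?C = "component (S - {v}) x"
  have C: "?C \<subseteq> S - {v}" using component_subset[OF assms(3)] .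
  have same: "{u \<in> insert v ?C. E y u} = {u \<in> S. E y u}" if "y \<in> ?C" for y
    using C component_closed[OF assms(3) that] assms(2) by blast
  obtain z where z: "z \<in> ?C" "E v z" using component_has_neighbor[OF assms] .
  have "{u \<in> insert v ?C. E v u} = {z}"
  proof (intro equalityI subsetI)
    fix u assume u: "u \<in> {u \<in> insert v ?C. E v u}"
    then have "u \<in> component (S - {v}) z" using edge_irrefl component_eq[OF z(1)] by auto
    then show "u \<in> {z}"
      using unique_neighbor_in_component[of v "S - {v}" z u] z C u by blast
  qed (use z in blast)
  then have "v \<in> leaves (insert v ?C) E" by (simp add: leaves_def)
  moreover have "y \<in> leaves (insert v ?C) E \<longleftrightarrow> y \<in> leaves S E" if "y \<in> ?C" for y
    using same[OF that] that C by (auto simp: leaves_def)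
  ultimately show ?thesis using C by (auto simp: leaves_def)
qed

lemma connected_on_branch:
  assumes "connected_on S" "v \<in> S" "x \<in> S - {v}"
  shows "connected_on (insert v (component (S - {v}) x))"
proof -
  let ?C = "component (S - {v}) x"
  obtain z where z: "z \<in> ?C" "E v z" using component_has_neighbor[OF assms] .
  have from_v: "(induced (insert v ?C))\<^sup>*\<^sup>* v t" if "t \<in> insert v ?C" for t
  proof (cases "t = v")
    case False
    then have "t \<in> component (S - {v}) z" using that component_eq[OF z(1)] by simp
    then have "(induced (component (S - {v}) z))\<^sup>*\<^sup>* z t"
      using induced_rtranclp_within_component by (simp add: component_def)
    then have "(induced (insert v ?C))\<^sup>*\<^sup>* z t"
      using component_eq[OF z(1)] induced_rtranclp_mono[of ?C "insert v ?C"] by auto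
    moreover have "induced (insert v ?C) v z" using z by (simp add: induced_def)
    ultimately show ?thesis by (rule converse_rtranclp_into_rtranclp[rotated])
  qed simp
  show ?thesis
    unfolding connected_on_def using from_v induced_rtranclp_sym rtranclp_trans by metis
qed

lemma card_leaves_branch_le:
  assumes "finite S" "connected_on S" "v \<in> S - leaves S E" "x \<in> S - {v}"
  shows "card (leaves (insert v (component (S - {v}) x)) E) \<le> card (leaves S E)"
proof -
  let ?C = "component (S - {v}) x"
  have v: "v \<in> S" using assms(3) by simp
  have C: "?C \<subseteq> S - {v}" using component_subset[OF assms(4)] .
  obtain z where z: "z \<in> ?C" "E v z" using component_has_neighbor[OF assms(2) v assms(4)] .
  have "card {u \<in> S. E v u} \<noteq> 1" using assms(3) by (simp add: leaves_def)
  moreover have "z \<in> {u \<in> S. E v u}" using z C by auto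
  ultimately have "{u \<in> S. E v u} \<noteq> {z}" by auto
  with \<open>z \<in> {u \<in> S. E v u}\<close> obtain w where w: "w \<in> S" "E v w" "w \<noteq> z" by blast
  have "w \<notin> ?C"
    using unique_neighbor_in_component[of v "S - {v}" z w] z w C component_eq[OF z(1)] by blast
  have "w \<noteq> v" using w(2) edge_irrefl by blast
  then obtain u where u: "u \<in> component (S - {v}) w" "u \<in> leaves S E"
    using component_meets_leaves[OF assms(1) v _ w(2)] w(1) by blast
  have "u \<notin> ?C"
  proof
    assume "u \<in> ?C"
    then have "component (S - {v}) w = ?C" using component_eq[OF u(1)] component_eq by blast
    with \<open>w \<notin> ?C\<close> show False using self_in_component by blast
  qed
  have fin: "finite (leaves S E)" using assms(1) by (simp add: leaves_def)
  have "leaves (insert v ?C) E \<subseteq> insert v (leaves S E - {u})"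
    using leaves_branch[OF assms(2) v assms(4)] \<open>u \<notin> ?C\<close> by blast
  then have "card (leaves (insert v ?C) E) \<le> card (insert v (leaves S E - {u}))"
    using fin by (intro card_mono) auto
  also have "\<dots> \<le> Suc (card (leaves S E - {u}))" by (simp add: card_insert_if fin)
  also have "\<dots> = card (leaves S E)" by (rule card_Suc_Diff1[OF fin u(2)])
  finally show ?thesis .
qed

lemma components_across_edge_disjoint:
  assumes "v \<in> S" "w \<in> S - {v}" "E v w"
  shows "component (S - {w}) v \<inter> component (S - {v}) w = {}"
proof (rule ccontr)
  let ?C = "component (S - {v}) w"
  assume "component (S - {w}) v \<inter> ?C \<noteq> {}"
  then obtain d where "(induced (S - {w}))\<^sup>*\<^sup>* v d" "d \<in> ?C" by (auto simp: component_def)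
  moreover have C: "?C \<subseteq> S - {v}" using component_subset[OF assms(2)] .
  ultimately obtain y z where yz: "induced (S - {w}) y z" "y \<notin> ?C" "z \<in> ?C"
    using rtranclp_step_into[of "induced (S - {w})" v d "\<lambda>t. t \<in> ?C"] by blast
  show False
  proof (cases "y = v")
    case True
    then have "E v z" "z \<noteq> w" using yz(1) by (auto simp: induced_def)
    with yz(3) assms(3) C show False
      using unique_neighbor_in_component[of v "S - {v}" w z] assms(2) by blast
  next
    case False
    then have "y \<in> S - {v}" "E z y" using yz(1) edge_sym unfolding induced_def by blast+
    with yz(2,3) show False using component_closed[OF assms(2)] by blast
  qed
qed

lemma component_beyond_edge_subset:
  assumes "connected_on S" "v \<in> S" "w \<in> S - {v}" "E v w"
    and "x \<in> S - {w}" "v \<notin> component (S - {w}) x"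
  shows "component (S - {w}) x \<subseteq> component (S - {v}) w - {w}"
proof
  let ?D = "component (S - {w}) x"
  have D: "?D \<subseteq> S - {w}" using component_subset[OF assms(5)] .
  have "(induced S)\<^sup>*\<^sup>* x w" using assms(1,3,5) unfolding connected_on_def by blast
  then obtain y z where yz: "induced S y z" "y \<in> ?D" "z \<notin> ?D"
    using rtranclp_step_into[of "induced S" x w "\<lambda>t. t \<notin> ?D"] self_in_component D by blast
  have "z = w"
  proof (rule ccontr)
    assume "z \<noteq> w"
    then have "z \<in> ?D" using yz(1,2) component_closed[OF assms(5)] by (auto simp: induced_def)
    with yz(3) show False ..
  qed
  fix d assume d: "d \<in> ?D"
  then have Dd: "component (S - {w}) d = ?D" by (rule component_eq)
  with yz(2) have "y \<in> component (S - {w}) d" by simp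
  then have "(induced (S - {w}))\<^sup>*\<^sup>* d y" by (simp add: component_def)
  then have "(induced ?D)\<^sup>*\<^sup>* d y" using induced_rtranclp_within_component Dd by metis
  moreover have "?D \<subseteq> S - {v}" using D assms(6) by blast
  ultimately have "(induced (S - {v}))\<^sup>*\<^sup>* d y" by (rule induced_rtranclp_mono[rotated])
  moreover have "induced (S - {v}) y w"
    using yz(1,2) \<open>z = w\<close> assms(3,6) by (auto simp: induced_def)
  ultimately have "w \<in> component (S - {v}) d" by (simp add: component_def)
  then have "d \<in> component (S - {v}) w" using component_eq self_in_component by blast
  with d D show "d \<in> component (S - {v}) w - {w}" by blast
qed

lemma heavy_component_shrinks:
  assumes "finite S" "connected_on S" "v \<in> S" "w \<in> S - {v}" "E v w"
    and "x \<in> S - {w}" "card S < 2 * card (component (S - {w}) x)"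
    and "card S < 2 * card (component (S - {v}) w)"
  shows "card (component (S - {w}) x) < card (component (S - {v}) w)"
proof -
  let ?C = "component (S - {v}) w" and ?D = "component (S - {w}) x"
  have C: "?C \<subseteq> S - {v}" and D: "?D \<subseteq> S - {w}"
    using component_subset[OF assms(4)] component_subset[OF assms(6)] .
  then have fin: "finite ?C" "finite ?D" using assms(1) finite_subset by blast+
  show ?thesis
  proof (cases "v \<in> ?D")
    case True
    then have "?D = component (S - {w}) v" by (rule component_eq[symmetric])
    with components_across_edge_disjoint[OF assms(3-5)] have "?D \<inter> ?C = {}" by simp
    then have "card (?D \<union> ?C) = card ?D + card ?C" using card_Un_disjoint[OF fin(2,1)] by simp
    moreover have "card (?D \<union> ?C) \<le> card S" using C D assms(1) by (intro card_mono) auto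
    ultimately show ?thesis using assms(7,8) by linarith
  next
    case False
    then have "?D \<subseteq> ?C - {w}" by (rule component_beyond_edge_subset[OF assms(2-6)])
    then have "card ?D \<le> card (?C - {w})" using fin by (intro card_mono) auto
    also have "\<dots> < card ?C" using card_Diff1_less[OF fin(1) self_in_component] .
    finally show ?thesis .
  qed
qed

definition is_centroid :: "'a set \<Rightarrow> 'a \<Rightarrow> bool" where
  "is_centroid S v \<longleftrightarrow> v \<in> S \<and> (\<forall>x \<in> S - {v}. 2 * card (component (S - {v}) x) \<le> card S)"

lemma centroid_exists:
  assumes "finite S" "S \<noteq> {}" "connected_on S"
  obtains v where "is_centroid S v"
proof -
  have "\<exists>v. is_centroid S v"
  proof (rule ccontr)
    assume "\<nexists>v. is_centroid S v"
    then have heavy: "\<exists>x \<in> S - {v}. card S < 2 * card (component (S - {v}) x)" if "v \<in> S" for v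
      using that by (auto simp: is_centroid_def not_le)
    define m where "m vx = card (component (S - {fst vx}) (snd vx))" for vx
    define H where "H vx \<longleftrightarrow> fst vx \<in> S \<and> snd vx \<in> S - {fst vx} \<and> card S < 2 * m vx" for vx
    obtain v0 where "v0 \<in> S" using assms(2) by blast
    then obtain x0 where "H (v0, x0)" using heavy by (auto simp: H_def m_def)
    then obtain vx where "H vx" and lightest: "\<And>ux. H ux \<Longrightarrow> m vx \<le> m ux"
      using ex_has_least_nat[of H "(v0, x0)" m] by blast
    obtain v x where vx: "vx = (v, x)" by fastforce
    with \<open>H vx\<close> have v: "v \<in> S" "x \<in> S - {v}" "card S < 2 * m (v, x)" by (auto simp: H_def)
    obtain w where w: "w \<in> component (S - {v}) x" "E v w"
      using component_has_neighbor[OF assms(3) v(1,2)] .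
    then have w': "w \<in> S - {v}" using component_subset[OF v(2)] by blast
    have mvx: "m (v, x) = card (component (S - {v}) w)"
      using component_eq[OF w(1)] by (simp add: m_def)
    obtain x' where x': "x' \<in> S - {w}" "card S < 2 * m (w, x')"
      using heavy[OF DiffD1[OF w']] by (auto simp: m_def)
    then have "m (w, x') < m (v, x)"
      using heavy_component_shrinks[OF assms(1,3) v(1) w' w(2)] v(3) mvx by (simp add: m_def)
    moreover have "m (v, x) \<le> m (w, x')" using lightest[of "(w, x')"] x' w' vx by (simp add: H_def)
    ultimately show False by simp
  qed
  with that show thesis by blast
qed

lemma centroid_not_leaf:
  assumes "finite S" "connected_on S" "is_centroid S v" "4 \<le> card S"
  shows "v \<notin> leaves S E"
proof
  assume "v \<in> leaves S E"
  then obtain w where N: "{u \<in> S. E v u} = {w}" by (auto simp: leaves_def card_1_singleton_iff)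
  have v: "v \<in> S" using assms(3) by (simp add: is_centroid_def)
  have w: "w \<in> S - {v}" using N edge_irrefl by blast
  have "S - {v} \<subseteq> component (S - {v}) w"
  proof
    fix x assume x: "x \<in> S - {v}"
    obtain z where z: "z \<in> component (S - {v}) x" "E v z"
      using component_has_neighbor[OF assms(2) v x] .
    then have "z = w" using N component_subset[OF x] by blast
    with z(1) show "x \<in> component (S - {v}) w" using component_eq self_in_component by metis
  qed
  then have "card (S - {v}) \<le> card (component (S - {v}) w)"
    using component_subset[OF w] assms(1) by (intro card_mono) (auto intro: finite_subset)
  moreover have "2 * card (component (S - {v}) w) \<le> card S"
    using assms(3) w by (simp add: is_centroid_def)
  ultimately show False using assms(4) v assms(1) by simp
qed

lemma extends_to_proper_from_branches:
  assumes "v \<in> S" "p v = Some c" "dom p \<subseteq> S"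
    and branches: "\<And>x. x \<in> S - {v} \<Longrightarrow> extends_to_proper (insert v (component (S - {v}) x)) E p"
  shows "extends_to_proper S E p"
proof -
  define T where "T x = insert v (component (S - {v}) x)" for x
  define col where "col x = (SOME g. (\<forall>u\<in>T x. \<forall>w\<in>T x. E u w \<longrightarrow> g u \<noteq> g w)
      \<and> (\<forall>y\<in>dom p. p y = Some (g y)))" for x
  have col: "(\<forall>u\<in>T x. \<forall>w\<in>T x. E u w \<longrightarrow> col x u \<noteq> col x w) \<and> (\<forall>y\<in>dom p. p y = Some (col x y))"
    if "x \<in> S - {v}" for x
  proof -
    have "\<exists>g. (\<forall>u\<in>T x. \<forall>w\<in>T x. E u w \<longrightarrow> g u \<noteq> g w) \<and> (\<forall>y\<in>dom p. p y = Some (g y))"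
      using branches[OF that] unfolding extends_to_proper_def T_def .
    then show ?thesis unfolding col_def by (rule someI_ex)
  qed
  have col_v: "col x v = c" if "x \<in> S - {v}" for x
  proof -
    have "v \<in> dom p" using assms(2) by blast
    then have "p v = Some (col x v)" using col[OF that] by blast
    with assms(2) show ?thesis by simp
  qed
  \<comment> \<open>\<open>col x\<close> depends only on the branch of \<open>x\<close>, and all these colorings agree at \<open>v\<close>.\<close>
  define g where "g x = (if x = v then c else col x x)" for x
  have edge: "g u \<noteq> g w" if "u \<in> S - {v}" "w \<in> S" "E u w" for u w
  proof -
    have "w \<in> T u"
      using that component_closed[OF that(1) self_in_component] by (auto simp: T_def)
    moreover have "u \<in> T u" by (simp add: T_def self_in_component)
    ultimately have "col u u \<noteq> col u w" using col[OF that(1)] that(3) by blast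
    moreover have "g w = col u w"
    proof (cases "w = v")
      case False
      with \<open>w \<in> T u\<close> have "component (S - {v}) w = component (S - {v}) u"
        by (simp add: T_def component_eq)
      then show ?thesis using False by (simp add: g_def T_def col_def)
    qed (simp add: g_def col_v[OF that(1)])
    ultimately show ?thesis using that(1) by (simp add: g_def)
  qed
  have "g u \<noteq> g w" if "u \<in> S" "w \<in> S" "E u w" for u w
  proof (cases "u = v")
    case True
    with that edge_irrefl have "w \<in> S - {v}" by blast
    with that show ?thesis using edge[of w u] edge_sym by metis
  qed (use edge that in blast)
  moreover have "p y = Some (g y)" if "y \<in> dom p" for y
  proof (cases "y = v")
    case False
    with that assms(3) have "y \<in> S - {v}" by blast
    then have "p y = Some (col y y)" using col that by blast
    with False show ?thesis by (simp add: g_def)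
  qed (use assms(2) in \<open>simp add: g_def\<close>)
  ultimately show ?thesis unfolding extends_to_proper_def by blast
qed

lemma proper_partial_upd:
  assumes "proper_partial E p" "\<And>y. E x y \<Longrightarrow> p y \<noteq> Some c"
  shows "proper_partial E (p(x \<mapsto> c))"
  unfolding proper_partial_def
proof (intro allI impI)
  fix u w assume uw: "E u w" "(p(x \<mapsto> c)) u \<noteq> None" "(p(x \<mapsto> c)) w \<noteq> None"
  consider "u = x" | "w = x" | "u \<noteq> x" "w \<noteq> x" by blast
  then show "(p(x \<mapsto> c)) u \<noteq> (p(x \<mapsto> c)) w"
  proof cases
    case 1
    with uw(1) edge_irrefl have "w \<noteq> x" by blast
    with 1 show ?thesis using assms(2)[of w] uw(1) by simp
  next
    case 2
    with uw(1) edge_irrefl have "u \<noteq> x" by blast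
    with 2 show ?thesis using assms(2)[of u] edge_sym[OF uw(1)] by simp
  next
    case 3
    with uw assms(1) show ?thesis unfolding proper_partial_def by simp
  qed
qed

lemma extends_to_proper_if_degree_le_2:
  assumes "finite S" "\<And>x. x \<in> S \<Longrightarrow> card {y \<in> S. E x y} \<le> 2"
  shows "dom p \<subseteq> S \<Longrightarrow> proper_partial E p \<Longrightarrow> extends_to_proper S E p"
proof (induction "card (S - dom p)" arbitrary: p)
  case 0
  then have "S \<subseteq> dom p" using assms(1) by auto
  have "the (p u) \<noteq> the (p w)" if "u \<in> S" "w \<in> S" "E u w" for u w
  proof -
    have "p u \<noteq> None" "p w \<noteq> None" using that \<open>S \<subseteq> dom p\<close> by auto
    moreover from this 0(3) that(3) have "p u \<noteq> p w" unfolding proper_partial_def by blast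
    ultimately show ?thesis by (metis option.collapse)
  qed
  then show ?case unfolding extends_to_proper_def by (intro exI[of _ "\<lambda>x. the (p x)"]) auto
next
  case (Suc n)
  then have "S - dom p \<noteq> {}" by auto
  then obtain x where x: "x \<in> S" "x \<notin> dom p" by blast
  obtain c where c: "Some c \<notin> p ` {y \<in> S. E x y}"
    using exists_color_not_in[OF _ assms(2)[OF x(1)]] assms(1) by auto
  have "S - dom (p(x \<mapsto> c)) = (S - dom p) - {x}" by auto
  then have "n = card (S - dom (p(x \<mapsto> c)))" using Suc.hyps(2) x assms(1) by simp
  moreover have "dom (p(x \<mapsto> c)) \<subseteq> S" using Suc.prems(1) x(1) by simp
  moreover have "p y \<noteq> Some c" if "E x y" for y
  proof
    assume "p y = Some c"
    then have "y \<in> S" using Suc.prems(1) by blast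
    with that \<open>p y = Some c\<close> have "Some c \<in> p ` {y \<in> S. E x y}" by (intro image_eqI[of _ p y]) auto
    with c show False ..
  qed
  then have "proper_partial E (p(x \<mapsto> c))" by (rule proper_partial_upd[OF Suc.prems(2)])
  ultimately have "extends_to_proper S E (p(x \<mapsto> c))" by (rule Suc.hyps(1))
  moreover have "p \<subseteq>\<^sub>m p(x \<mapsto> c)" using x(2) by (auto simp: map_le_def)
  ultimately show ?case using extends_to_proper_map_le by blast
qed

lemma extends_to_proper_if_card_le_3:
  assumes "finite S" "card S \<le> 3" "dom p \<subseteq> S" "proper_partial E p"
  shows "extends_to_proper S E p"
proof (rule extends_to_proper_if_degree_le_2[OF assms(1) _ assms(3,4)])
  fix x assume "x \<in> S"
  have "{y \<in> S. E x y} \<subseteq> S - {x}" using edge_irrefl by blast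
  then have "card {y \<in> S. E x y} \<le> card (S - {x})" using assms(1) by (intro card_mono) auto
  also have "\<dots> = card S - 1" using \<open>x \<in> S\<close> assms(1) by simp
  finally show "card {y \<in> S. E x y} \<le> 2" using assms(2) by simp
qed

lemma spoiler_wins_if_card_le_3:
  assumes "finite S" "card S \<le> 3" "dom p \<subseteq> S" "\<not> extends_to_proper S E p"
  shows "spoiler_wins V E k r p"
  using extends_to_proper_if_card_le_3[OF assms(1-3)] assms(4) spoiler_wins_if_improper by blast

lemma branch_position:
  assumes "finite S" "connected_on S" "dom p = leaves S E" "is_centroid S v" "v \<notin> dom p"
    and "x \<in> S - {v}"
  defines "T \<equiv> insert v (component (S - {v}) x)"
  shows "T \<subseteq> S" "connected_on T" "dom (p(v \<mapsto> c) |` T) = leaves T E"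
    "card (leaves T E) \<le> card (leaves S E)" "2 * card T \<le> card S + 2"
proof -
  let ?C = "component (S - {v}) x"
  have v: "v \<in> S" using assms(4) by (simp add: is_centroid_def)
  have C: "?C \<subseteq> S - {v}" using component_subset[OF assms(6)] .
  with v show "T \<subseteq> S" unfolding T_def by blast
  show "connected_on T" unfolding T_def using connected_on_branch[OF assms(2) v assms(6)] .
  show "dom (p(v \<mapsto> c) |` T) = leaves T E"
    unfolding T_def using leaves_branch[OF assms(2) v assms(6)] assms(3) by auto
  show "card (leaves T E) \<le> card (leaves S E)"
    unfolding T_def using card_leaves_branch_le[OF assms(1,2) _ assms(6)] v assms(3,5) by simp
  have "card T \<le> Suc (card ?C)"
    unfolding T_def using C assms(1) by (simp add: card_insert_if finite_subset)
  moreover have "2 * card ?C \<le> card S" using assms(4,6) by (simp add: is_centroid_def)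
  ultimately show "2 * card T \<le> card S + 2" by simp
qed

lemma spoiler_wins_on_subtree:
  assumes "finite V"
  shows "S \<subseteq> V \<Longrightarrow> connected_on S \<Longrightarrow> dom p = leaves S E \<Longrightarrow> card (leaves S E) < k
    \<Longrightarrow> card S \<le> 2 ^ r + 2 \<Longrightarrow> \<not> extends_to_proper S E p \<Longrightarrow> spoiler_wins V E k r p"
proof (induction r arbitrary: S p)
  case 0
  have "finite S" using 0(1) assms finite_subset by blast
  moreover have "dom p \<subseteq> S" using 0(3) by (simp add: leaves_def)
  moreover have "card S \<le> 3" using 0(5) by simp
  ultimately show ?case using spoiler_wins_if_card_le_3 0(6) by blast
next
  case (Suc r)
  have finS: "finite S" using Suc.prems(1) assms finite_subset by blast
  have domS: "dom p \<subseteq> S" using Suc.prems(3) by (simp add: leaves_def)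
  show ?case
  proof (cases "card S \<le> 3")
    case True
    then show ?thesis using spoiler_wins_if_card_le_3 finS domS Suc.prems(6) by blast
  next
    case False
    then have "S \<noteq> {}" by auto
    then obtain v where v: "is_centroid S v" using centroid_exists finS Suc.prems(2) by blast
    have vS: "v \<in> S" using v by (simp add: is_centroid_def)
    have "v \<notin> dom p" using centroid_not_leaf[OF finS Suc.prems(2) v] False Suc.prems(3) by simp
    have "spoiler_wins V E k r (p(v \<mapsto> c))" for c
    proof (cases "proper_partial E (p(v \<mapsto> c))")
      case False
      then show ?thesis by (rule spoiler_wins_if_improper)
    next
      case True
      have "p \<subseteq>\<^sub>m p(v \<mapsto> c)" using \<open>v \<notin> dom p\<close> by (auto simp: map_le_def)
      with Suc.prems(6) have "\<not> extends_to_proper S E (p(v \<mapsto> c))"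
        using extends_to_proper_map_le by blast
      then obtain x where x: "x \<in> S - {v}"
        and stuck: "\<not> extends_to_proper (insert v (component (S - {v}) x)) E (p(v \<mapsto> c))"
        using extends_to_proper_from_branches[of v S "p(v \<mapsto> c)" c] vS domS by auto
      let ?T = "insert v (component (S - {v}) x)"
      note T = branch_position[OF finS Suc.prems(2,3) v \<open>v \<notin> dom p\<close> x]
      have "spoiler_wins V E k r (p(v \<mapsto> c) |` ?T)"
      proof (rule Suc.IH)
        show "?T \<subseteq> V" using T(1) Suc.prems(1) by blast
        show "connected_on ?T" by (rule T(2))
        show "dom (p(v \<mapsto> c) |` ?T) = leaves ?T E" by (rule T(3))
        show "card (leaves ?T E) < k" using T(4) Suc.prems(4) by simp
        show "card ?T \<le> 2 ^ r + 2" using T(5) Suc.prems(5) by simp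
        show "\<not> extends_to_proper ?T E (p(v \<mapsto> c) |` ?T)"
          using stuck extends_to_proper_restrict by blast
      qed
      then show ?thesis by (rule spoiler_wins_map_le[rotated]) (auto simp: map_le_def)
    qed
    moreover have "v \<in> V" using vS Suc.prems(1) by blast
    moreover have "card (dom p) + 1 \<le> k" using Suc.prems(3,4) by simp
    ultimately show ?thesis using \<open>v \<notin> dom p\<close> map_le_refl unfolding spoiler_wins.simps by blast
  qed
qed

end

theorem lemma8:
  fixes V :: "'a set" and E :: "'a \<Rightarrow> 'a \<Rightarrow> bool" and p :: "'a \<Rightarrow> color option"
    and k r :: nat
  assumes "is_tree V E"
    and "card V \<le> 2 ^ r + 2"
    and "card (leaves V E) < k"
    and "dom p = leaves V E"
    and "\<not> extends_to_proper V E p"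
  shows "spoiler_wins V E k r p"
proof -
  from assms(1) have graph: "simple_graph V E" "connected_graph V E" and "\<nexists>cs. is_cycle E cs"
    unfolding is_tree_def by auto
  moreover have "E u w \<Longrightarrow> E w u" "\<not> E u u" for u w
    using graph(1) unfolding simple_graph_def by blast+
  ultimately interpret forest E by unfold_locales blast+
  have "induced V = E"
    using graph(1) unfolding simple_graph_def induced_def fun_eq_iff by blast
  with graph(2) have "connected_on V" by (simp add: connected_graph_def connected_on_def)
  moreover have "finite V" using graph(1) by (simp add: simple_graph_def)
  ultimately show ?thesis using spoiler_wins_on_subtree[OF _ subset_refl] assms(2-5) by blast
qed

end
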